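(* If $k \geq 9$ then the sets $\pi_{q_k}(S_{k-1}) + 1$ and $g_{q_k,k}(\pi_{q_k}(A_{q_k}))$ are $q_k^{-2k-4}$-strongly interleaved.
   Context: $q_k$ is the unique root in $(1,2)$ of $x^k - x^{k-1} - \cdots - x - 1 = 0$; note $\sum_{j=1}^k q_k^{-j} = 1$. $\pi_q((\epsilon_j)_{j\ge1}) = \sum_{j\ge1}\epsilon_j q^{-j}$. $S_{k-1}$ is the set of $(\epsilon_j) \in \{0,1\}^\mathbb{N}$ containing no block of consecutive entries equal to $01^{k-1}$ or $10^{k-1}$ (words concatenated, $a^n$ = $n$ repetitions). $g_{q,k}(x) = q^{-k}x + \sum_{j=1}^{k-1}q^{-j}$. The set $A_{q_k}$: let $(c_j)_{j\ge1} = 1^k0^\infty$; let $J = \{j : c_j = 0\}$ enumerated as $j_0 < j_1 < \cdots$; $J_{\mathrm{fixed},1} = \{j_n : n = 4m+1, m \ge 0\}$, $J_{\mathrm{fixed},0} = \{j_n : n = 4m+3, m\ge 0\}$. Then $A_{q_k}$ is the set of $(a_j) \in \{0,1\}^\mathbb{N}$ with $a_j = 1$ if $c_j = 1$, $a_j = 1$ if $j \in J_{\mathrm{fixed},1}$, and $a_j = 0$ if $j \in J_{\mathrm{fixed},0}$ (other entries free). A gap of a compact $C\subset\mathbb{R}$ is a maximal connected component of $\mathbb{R}\setminus C$; compact $C_1,C_2$ are interleaved if neither lies in a gap of the other. $d_{\mathrm{H}}$ is the Hausdorff distance; compact $A,B$ are $\epsilon$-strongly interleaved if any compact $A',B'$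 with $d_{\mathrm{H}}(A,A')\le\epsilon$, $d_{\mathrm{H}}(B,B')\le\epsilon$ are interleaved. *)

theory Defs
  imports "HOL-Analysis.Analysis" "HOL-Library.Infinite_Set"
begin

(* Sequences (eps_j)_{j>=1} in {0,1}^N are represented as functions nat => bool
   (True = 1); the value at index 0 is ignored everywhere. *)

definition qk :: "nat \<Rightarrow> real" where
  "qk k = (THE x. 1 < x \<and> x < 2 \<and> x ^ k - (\<Sum>j<k. x ^ j) = 0)"

definition pi_q :: "real \<Rightarrow> (nat \<Rightarrow> bool) \<Rightarrow> real" where
  "pi_q q e = (\<Sum>j. of_bool (e (Suc j)) * q powi (- int (Suc j)))"

definition S_set :: "nat \<Rightarrow> (nat \<Rightarrow> bool) set" where
  "S_set n = {e. \<not> (\<exists>i\<ge>1. \<not> e i \<and> (\<forall>m\<in>{1..n}. e (i + m)))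
              \<and> \<not> (\<exists>i\<ge>1. e i \<and> (\<forall>m\<in>{1..n}. \<not> e (i + m)))}"

definition g_qk :: "real \<Rightarrow> nat \<Rightarrow> real \<Rightarrow> real" where
  "g_qk q k x = q powi (- int k) * x + (\<Sum>j=1..k-1. q powi (- int j))"

definition c_seq :: "nat \<Rightarrow> nat \<Rightarrow> bool" where
  "c_seq k j = (1 \<le> j \<and> j \<le> k)"

definition J_set :: "nat \<Rightarrow> nat set" where
  "J_set k = {j. 1 \<le> j \<and> \<not> c_seq k j}"

definition J_fixed1 :: "nat \<Rightarrow> nat set" where
  "J_fixed1 k = {enumerate (J_set k) n | n. n mod 4 = 1}"

definition J_fixed0 :: "nat \<Rightarrow> nat set" where
  "J_fixed0 k = {enumerate (J_set k) n | n. n mod 4 = 3}"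

definition A_set :: "nat \<Rightarrow> (nat \<Rightarrow> bool) set" where
  "A_set k = {a. \<forall>j\<ge>1. (c_seq k j \<longrightarrow> a j) \<and> (j \<in> J_fixed1 k \<longrightarrow> a j)
                       \<and> (j \<in> J_fixed0 k \<longrightarrow> \<not> a j)}"

definition gaps :: "real set \<Rightarrow> real set set" where
  "gaps C = {connected_component_set (- C) x | x. x \<notin> C}"

definition in_gap :: "real set \<Rightarrow> real set \<Rightarrow> bool" where
  "in_gap D C = (\<exists>G\<in>gaps C. D \<subseteq> G)"

definition interleaved :: "real set \<Rightarrow> real set \<Rightarrow> bool" where
  "interleaved C1 C2 = (\<not> in_gap C1 C2 \<and> \<not> in_gap C2 C1)"

(* Hausdorff distance (meaningful for nonempty compact sets) *)
definition hausdorff_dist :: "real set \<Rightarrow> real set \<Rightarrow> real" where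
  "hausdorff_dist A B = max (SUP a\<in>A. infdist a B) (SUP b\<in>B. infdist b A)"

definition strongly_interleaved :: "real \<Rightarrow> real set \<Rightarrow> real set \<Rightarrow> bool" where
  "strongly_interleaved \<epsilon> A B =
     (\<forall>A' B'. compact A' \<and> compact B' \<and> A' \<noteq> {} \<and> B' \<noteq> {}
        \<and> hausdorff_dist A A' \<le> \<epsilon> \<and> hausdorff_dist B B' \<le> \<epsilon>
        \<longrightarrow> interleaved A' B')"

end

theory Submission
  imports Defs
begin

text \<open>Put \<open>r = 1/q\<^sub>k\<close>, so that \<open>r + \<dots> + r^k = 1\<close> and \<open>1/2 < r < 10/19\<close>, and let
  \<open>\<epsilon> = r^(2k+4)\<close>.  The first set lies in \<open>[1, 1 + r/(1-r)]\<close> and contains both endpoints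
  (the constant sequences lie in \<open>S\<^sub>k\<^sub>-\<^sub>1\<close>).  The map \<open>g\<close> sends \<open>\<pi>(a)\<close> to \<open>1 + r^k (\<pi>(a) - 1)\<close>,
  and \<open>\<pi>(a) \<ge> 1 + r^(k+2)\<close> for \<open>a \<in> A\<close> (its digits \<open>1, \<dots>, k\<close> and \<open>k+2\<close> are \<open>1\<close>), so the
  second set stays \<open>2\<epsilon>\<close> inside that interval.  Moreover the point \<open>1 + \<pi>(0^(2k) (10)^\<infinity>)\<close>
  of the first set lies \<open>2\<epsilon>\<close>-deep between the images of the least and the greatest
  element of \<open>A\<close>.  Perturbations by at most \<open>\<epsilon>\<close> preserve both configurations, so neither
  perturbed set fits into a gap of the other.\<close>

section \<open>The constant \<open>q\<^sub>k\<close>\<close>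

lemma sum_inverse_powers_eq_1_iff:
  fixes x :: real
  assumes "x \<noteq> 0"
  shows "x ^ k - (\<Sum>j<k. x ^ j) = 0 \<longleftrightarrow> (\<Sum>j<k. inverse x ^ Suc j) = 1"
proof -
  have "(\<Sum>j<k. x ^ j) = (\<Sum>i<k. x ^ (k - Suc i))"
    by (rule sum.nat_diff_reindex[symmetric])
  also have "\<dots> = x ^ k * (\<Sum>i<k. inverse x ^ Suc i)"
    unfolding sum_distrib_left
    by (rule sum.cong) (use assms in \<open>auto simp: power_diff power_inverse field_simps\<close>)
  finally show ?thesis using assms by auto
qed

lemma sum_powers_eq_imp_eq:
  fixes r s :: real
  assumes "0 \<le> r" "0 \<le> s" "0 < k" "(\<Sum>j<k. r ^ Suc j) = (\<Sum>j<k. s ^ Suc j)"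
  shows "r = s"
proof -
  have mono: "(\<Sum>j<k. a ^ Suc j) < (\<Sum>j<k. b ^ Suc j)" if "0 \<le> a" "a < b" for a b :: real
    by (rule sum_strict_mono) (use that assms(3) in \<open>auto intro!: power_strict_mono simp del: power_Suc\<close>)
  show "r = s" using mono[of r s] mono[of s r] assms by (cases r s rule: linorder_cases) auto
qed

lemma qk_root:
  assumes "2 \<le> k"
  shows "1 < qk k" "qk k < 2" "(\<Sum>j<k. inverse (qk k) ^ Suc j) = 1"
proof -
  define p where "p x = x ^ k - (\<Sum>j<k. x ^ j)" for x :: real
  have "p 1 < 0" using assms by (simp add: p_def)
  moreover have "p 2 = 1" by (simp add: p_def geometric_sum)
  moreover have "continuous_on {1..2} p" unfolding p_def by (intro continuous_intros)
  ultimately obtain x where x: "1 \<le> x" "x \<le> 2" "p x = 0"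
    using IVT'[of p 1 0 2] by force
  moreover have "x \<noteq> 1" "x \<noteq> 2" using x(3) \<open>p 1 < 0\<close> \<open>p 2 = 1\<close> by auto
  ultimately have root: "1 < x \<and> x < 2 \<and> p x = 0" by auto
  have sum_1: "(\<Sum>j<k. inverse z ^ Suc j) = 1" if "1 < z" "p z = 0" for z
    using sum_inverse_powers_eq_1_iff[of z k] that by (simp add: p_def)
  have unique: "y = x" if "1 < y \<and> y < 2 \<and> p y = 0" for y
    using sum_powers_eq_imp_eq[of "inverse y" "inverse x" k] sum_1[of x] sum_1[of y] root that assms
    by simp
  have "\<exists>!y. 1 < y \<and> y < 2 \<and> p y = 0" using root unique by blast
  then have "1 < qk k \<and> qk k < 2 \<and> p (qk k) = 0"
    unfolding qk_def p_def by (rule theI')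
  then show "1 < qk k" "qk k < 2" "(\<Sum>j<k. inverse (qk k) ^ Suc j) = 1"
    using sum_inverse_powers_eq_1_iff[of "qk k" k] by (auto simp: p_def)
qed

lemma inverse_qk_bounds:
  assumes "4 \<le> k"
  shows "1/2 < inverse (qk k)" "inverse (qk k) < 10/19"
proof -
  define r where "r = inverse (qk k)"
  have "1 < qk k" "qk k < 2" and sum: "(\<Sum>j<k. r ^ Suc j) = 1"
    using qk_root assms unfolding r_def by auto
  then show "1/2 < inverse (qk k)"
    using less_imp_inverse_less[of "qk k" 2] by simp
  have "0 < r" using \<open>1 < qk k\<close> unfolding r_def by simp
  have "(\<Sum>j<4. r ^ Suc j) \<le> (\<Sum>j<k. r ^ Suc j)"
    by (rule sum_mono2) (use assms \<open>0 < r\<close> in auto)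
  then have "r + r^2 + r^3 + r^4 \<le> 1"
    using sum by (simp add: eval_nat_numeral)
  show "inverse (qk k) < 10/19"
  proof (rule ccontr)
    assume "\<not> inverse (qk k) < 10/19"
    then have "(10/19) ^ n \<le> r ^ n" for n
      unfolding r_def by (intro power_mono) auto
    from this[of 2] this[of 3] this[of 4] \<open>\<not> inverse (qk k) < 10/19\<close>
      \<open>r + r^2 + r^3 + r^4 \<le> 1\<close> show False
      unfolding r_def by (simp add: power_divide)
  qed
qed

section \<open>Expansions with ratio \<open>r\<close>\<close>

definition expansion :: "real \<Rightarrow> (nat \<Rightarrow> bool) \<Rightarrow> real" where
  "expansion r e = (\<Sum>i. of_bool (e (Suc i)) * r ^ Suc i)"

lemma powi_neg_eq_inverse_power: "(q::real) powi (- int n) = inverse q ^ n"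
  by (simp add: power_int_minus power_inverse)

lemma pi_q_eq_expansion: "pi_q q e = expansion (inverse q) e"
  unfolding pi_q_def expansion_def powi_neg_eq_inverse_power by simp

lemma g_qk_eq:
  assumes "0 < k" "(\<Sum>j<k. inverse q ^ Suc j) = 1"
  shows "g_qk q k x = 1 + inverse q ^ k * (x - 1)"
proof -
  have "(\<Sum>j<k. inverse q ^ Suc j) = (\<Sum>j=1..k-1. inverse q ^ j) + inverse q ^ k"
    using assms(1) by (cases k) (simp_all add: sum.atLeast1_atMost_eq del: power_Suc)
  with assms(2) show ?thesis
    by (simp add: g_qk_def powi_neg_eq_inverse_power algebra_simps)
qed

lemma expansion_False: "expansion r (\<lambda>_. False) = 0"
  by (simp add: expansion_def)

context
  fixes r :: real
  assumes r: "0 \<le> r" "r < 1"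
begin

lemma summable_expansion: "summable (\<lambda>i. of_bool (e (Suc i)) * r ^ Suc i)"
  by (rule summable_comparison_test'[where g="\<lambda>i. r ^ Suc i"])
    (use r summable_geometric[of r] in \<open>auto simp: summable_Suc_iff simp del: power_Suc\<close>)

lemma sum_le_expansion:
  assumes "finite I" "\<And>i. i \<in> I \<Longrightarrow> e (Suc i)"
  shows "(\<Sum>i\<in>I. r ^ Suc i) \<le> expansion r e"
proof -
  have "(\<Sum>i\<in>I. r ^ Suc i) = (\<Sum>i\<in>I. of_bool (e (Suc i)) * r ^ Suc i)"
    using assms(2) by simp
  also have "\<dots> \<le> expansion r e"
    unfolding expansion_def by (rule sum_le_suminf) (use r assms(1) summable_expansion in auto)
  finally show ?thesis .
qed

lemma expansion_le_sum:
  assumes "I \<subseteq> {..<n}" "\<And>i. i < n \<Longrightarrow> e (Suc i) \<Longrightarrow> i \<in> I"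
  shows "expansion r e \<le> (\<Sum>i\<in>I. r ^ Suc i) + r ^ Suc n / (1 - r)"
proof -
  let ?t = "\<lambda>i. of_bool (e (Suc i)) * r ^ Suc i"
  have tail: "(\<lambda>i. r ^ Suc (i + n)) sums (r ^ Suc n / (1 - r))"
    using sums_mult[OF geometric_sums[of r], of "r ^ Suc n"] r
    by (simp add: power_add mult_ac divide_inverse)
  have split: "expansion r e = (\<Sum>i<n. ?t i) + (\<Sum>i. ?t (i + n))"
    unfolding expansion_def using suminf_split_initial_segment[OF summable_expansion, where k=n]
    by simp
  have head: "(\<Sum>i<n. ?t i) \<le> (\<Sum>i\<in>I. r ^ Suc i)"
  proof -
    have "(\<Sum>i<n. ?t i) = (\<Sum>i\<in>I. ?t i)"
      by (rule sum.mono_neutral_right) (use assms in auto)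
    also have "\<dots> \<le> (\<Sum>i\<in>I. r ^ Suc i)"
      by (rule sum_mono) (use r in auto)
    finally show ?thesis .
  qed
  have "(\<Sum>i. ?t (i + n)) \<le> r ^ Suc n / (1 - r)"
    using suminf_le[of "\<lambda>i. ?t (i + n)" "\<lambda>i. r ^ Suc (i + n)"] tail r
      summable_expansion[THEN summable_ignore_initial_segment, where k=n]
    by (auto simp: sums_iff)
  with split head show ?thesis by linarith
qed

lemma expansion_bounds: "0 \<le> expansion r e" "expansion r e \<le> r / (1 - r)"
  using sum_le_expansion[of "{}"] expansion_le_sum[of "{}" 0] by auto

lemma expansion_True: "expansion r (\<lambda>_. True) = r / (1 - r)"
  using sums_mult[OF geometric_sums[of r], of r] r
  by (simp add: expansion_def sums_iff divide_inverse)

end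

section \<open>Strong interleaving on the real line\<close>

lemma hausdorff_dist_commute: "hausdorff_dist X Y = hausdorff_dist Y X"
  by (simp add: hausdorff_dist_def max.commute)

lemma infdist_le_hausdorff_dist:
  assumes "bounded X" "x \<in> X" "Y \<noteq> {}"
  shows "infdist x Y \<le> hausdorff_dist X Y"
proof -
  obtain y where "y \<in> Y" using assms(3) by blast
  obtain M where M: "\<And>a. a \<in> X \<Longrightarrow> norm a \<le> M"
    using assms(1) unfolding bounded_iff by blast
  have "infdist a Y \<le> M + norm y" if "a \<in> X" for a
    using infdist_le[OF \<open>y \<in> Y\<close>, of a] M[OF that] norm_triangle_ineq4[of a y]
    by (simp add: dist_norm)
  then have "bdd_above ((\<lambda>a. infdist a Y) ` X)" by (rule bdd_aboveI2)
  then have "infdist x Y \<le> (SUP a\<in>X. infdist a Y)" by (rule cSUP_upper[OF assms(2)])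
  then show ?thesis unfolding hausdorff_dist_def by simp
qed

lemma close_point_if_hausdorff_dist_le:
  assumes "bounded X" "x \<in> X" "Y \<noteq> {}" "Y \<subseteq> Z" "closed Z" "hausdorff_dist X Y \<le> \<epsilon>"
  shows "\<exists>z\<in>Z. dist x z \<le> \<epsilon>"
proof -
  have "infdist x Z \<le> \<epsilon>"
    using infdist_mono[OF assms(4,3), of x] infdist_le_hausdorff_dist[OF assms(1-3)] assms(6)
    by linarith
  then show ?thesis
    using infdist_attains_inf[OF assms(5)] assms(3,4) by (metis subset_empty)
qed

lemma not_in_gap_if_between:
  assumes "x \<in> D" "z \<in> D" "y \<in> C" "x \<le> y" "y \<le> z"
  shows "\<not> in_gap D C"
proof
  assume "in_gap D C"
  then obtain w where D: "D \<subseteq> connected_component_set (- C) w"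
    unfolding in_gap_def gaps_def by blast
  have "{x..z} \<subseteq> connected_component_set (- C) w"
    by (rule connected_contains_Icc[OF connected_connected_component]) (use D assms in blast)+
  then have "y \<in> - C" using assms(4,5) connected_component_subset by fastforce
  with assms(3) show False by simp
qed

lemma strongly_interleavedI:
  fixes S B :: "real set"
  assumes "bounded S" "lo \<in> S" "hi \<in> S" "B \<subseteq> {lo + 2 * \<epsilon>..hi - 2 * \<epsilon>}"
    and "s \<in> S" "b1 \<in> B" "b2 \<in> B" "b1 + 2 * \<epsilon> \<le> s" "s \<le> b2 - 2 * \<epsilon>"
  shows "strongly_interleaved \<epsilon> S B"
  unfolding strongly_interleaved_def interleaved_def
proof (intro allI impI conjI)
  fix S' B' :: "real set"
  assume "compact S' \<and> compact B' \<and> S' \<noteq> {} \<and> B' \<noteq> {}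
    \<and> hausdorff_dist S S' \<le> \<epsilon> \<and> hausdorff_dist B B' \<le> \<epsilon>"
  then have S': "closed S'" "S' \<noteq> {}" "hausdorff_dist S S' \<le> \<epsilon>"
    and B': "bounded B'" "closed B'" "B' \<noteq> {}" "hausdorff_dist B' B \<le> \<epsilon>" "hausdorff_dist B B' \<le> \<epsilon>"
    by (auto simp: compact_eq_bounded_closed hausdorff_dist_commute)
  have "bounded B" using assms(4) bounded_closed_interval bounded_subset by blast
  have near_S': "\<exists>x'\<in>S'. dist x x' \<le> \<epsilon>" if "x \<in> S" for x
    using close_point_if_hausdorff_dist_le[OF assms(1) that S'(2) order.refl S'(1,3)] .
  have near_B': "\<exists>x'\<in>B'. dist x x' \<le> \<epsilon>" if "x \<in> B" for x
    using close_point_if_hausdorff_dist_le[OF \<open>bounded B\<close> that B'(3) order.refl B'(2,5)] .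
  obtain lo' hi' where "lo' \<in> S'" "hi' \<in> S'" "dist lo lo' \<le> \<epsilon>" "dist hi hi' \<le> \<epsilon>"
    using near_S' assms(2,3) by blast
  moreover obtain b' where "b' \<in> B'" using B'(3) by blast
  \<comment> \<open>\<open>B\<close> need not be closed, so \<open>b'\<close> is approximated within the closed interval around \<open>B\<close>\<close>
  moreover obtain c where "c \<in> {lo + 2 * \<epsilon>..hi - 2 * \<epsilon>}" "dist b' c \<le> \<epsilon>"
    using close_point_if_hausdorff_dist_le[OF B'(1) \<open>b' \<in> B'\<close> _ assms(4) closed_atLeastAtMost B'(4)]
      assms(6) by blast
  ultimately show "\<not> in_gap S' B'"
    by (intro not_in_gap_if_between[of lo' _ hi' b']) (auto simp: dist_real_def)
  obtain b1' b2' s' where "b1' \<in> B'" "b2' \<in> B'" "s' \<in> S'"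
    "dist b1 b1' \<le> \<epsilon>" "dist b2 b2' \<le> \<epsilon>" "dist s s' \<le> \<epsilon>"
    using near_B' near_S' assms(5-7) by metis
  with assms(8,9) show "\<not> in_gap B' S'"
    by (intro not_in_gap_if_between[of b1' _ b2' s']) (auto simp: dist_real_def)
qed

section \<open>The sets \<open>A\<^sub>q\<^sub>k\<close> and \<open>S\<^sub>k\<^sub>-\<^sub>1\<close>\<close>

lemma enumerate_atLeast: "enumerate {m::nat..} n = m + n"
proof (induction n arbitrary: m)
  case 0
  show ?case by (simp add: enumerate_0 Least_equality)
next
  case (Suc n)
  have "(LEAST j::nat. m \<le> j) = m" "{m..} - {m} = {Suc m..}"
    by (auto intro: Least_equality)
  then show ?case by (simp add: enumerate_Suc Suc)
qed

lemma enumerate_J_set_mod_4: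
  "{enumerate (J_set k) n | n. n mod 4 = m} = {j. Suc k \<le> j \<and> (j - Suc k) mod 4 = m}"
proof -
  have "J_set k = {Suc k..}" by (auto simp: J_set_def c_seq_def)
  then show ?thesis
    by (auto simp: enumerate_atLeast intro!: exI[of _ "_ - Suc k"])
qed

lemma J_fixed1_eq: "J_fixed1 k = {j. Suc k \<le> j \<and> (j - Suc k) mod 4 = 1}"
  unfolding J_fixed1_def by (rule enumerate_J_set_mod_4)

lemma J_fixed0_eq: "J_fixed0 k = {j. Suc k \<le> j \<and> (j - Suc k) mod 4 = 3}"
  unfolding J_fixed0_def by (rule enumerate_J_set_mod_4)

definition A_least :: "nat \<Rightarrow> nat \<Rightarrow> bool" where
  "A_least k j = (c_seq k j \<or> j \<in> J_fixed1 k)"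

definition A_greatest :: "nat \<Rightarrow> nat \<Rightarrow> bool" where
  "A_greatest k j = (j \<notin> J_fixed0 k)"

lemma A_least_in_A_set: "A_least k \<in> A_set k"
  by (auto simp: A_set_def A_least_def c_seq_def J_fixed1_eq J_fixed0_eq)

lemma A_greatest_in_A_set: "A_greatest k \<in> A_set k"
  by (auto simp: A_set_def A_greatest_def c_seq_def J_fixed1_eq J_fixed0_eq)

definition odd_tail :: "nat \<Rightarrow> nat \<Rightarrow> bool" where
  "odd_tail n j = (n < j \<and> odd j)"

lemma S_set_const: "2 \<le> n \<Longrightarrow> (\<lambda>_. b) \<in> S_set n"
  unfolding S_set_def by (cases b) auto

lemma odd_tail_in_S_set: "2 \<le> n \<Longrightarrow> odd_tail m \<in> S_set n"
proof -
  assume "2 \<le> n"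
  then have "1 \<in> {1..n}" "2 \<in> {1..n}" by auto
  moreover have "\<not> (\<not> odd_tail m i \<and> odd_tail m (i + 1) \<and> odd_tail m (i + 2))"
    "\<not> (odd_tail m i \<and> \<not> odd_tail m (i + 2))" for i
    by (auto simp: odd_tail_def)
  ultimately show ?thesis unfolding S_set_def by blast
qed

context
  fixes r :: real and k :: nat
  assumes r: "0 \<le> r" "r < 1" and sum_r: "(\<Sum>j<k. r ^ Suc j) = 1"
begin

lemma expansion_A_set_ge:
  assumes "a \<in> A_set k"
  shows "1 + r ^ (k + 2) \<le> expansion r a"
proof -
  have "a (Suc i)" if "i \<in> insert (k + 1) {..<k}" for i
    using assms that by (auto simp: A_set_def c_seq_def J_fixed1_eq)
  then have "(\<Sum>i\<in>insert (k + 1) {..<k}. r ^ Suc i) \<le> expansion r a"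
    by (intro sum_le_expansion r) auto
  then show ?thesis using sum_r by simp
qed

lemma expansion_A_least_le: "expansion r (A_least k) \<le> 1 + r ^ (k + 2) + r ^ (k + 6) / (1 - r)"
proof -
  have "expansion r (A_least k) \<le> (\<Sum>i\<in>insert (k + 1) {..<k}. r ^ Suc i) + r ^ Suc (k + 5) / (1 - r)"
  proof (rule expansion_le_sum[OF r])
    fix i assume "i < k + 5" "A_least k (Suc i)"
    then consider "i < k" | "k \<le> i" "(i - k) mod 4 = 1"
      by (auto simp: A_least_def c_seq_def J_fixed1_eq)
    then show "i \<in> insert (k + 1) {..<k}"
    proof cases
      case 2
      with \<open>i < k + 5\<close> have "i - k = 1" by (cases "i - k = 4") auto
      with 2 show ?thesis by simp
    qed simp
  qed auto
  then show ?thesis using sum_r by (simp add: add_ac)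
qed

lemma expansion_A_greatest_ge: "1 + r ^ (k + 1) + r ^ (k + 2) + r ^ (k + 3) \<le> expansion r (A_greatest k)"
proof -
  have "A_greatest k (Suc i)" if "i < k + 3" for i
  proof -
    from that have "i - k < 3" by linarith
    then have "(i - k) mod 4 \<noteq> 3" by simp
    then show ?thesis by (simp add: A_greatest_def J_fixed0_eq)
  qed
  then have "(\<Sum>i<k + 3. r ^ Suc i) \<le> expansion r (A_greatest k)"
    by (intro sum_le_expansion[OF r]) auto
  then show ?thesis using sum_r by (simp add: eval_nat_numeral add_ac)
qed

end

lemma expansion_odd_tail_bounds:
  assumes "0 \<le> r" "r < 1"
  shows "r ^ (2 * k + 1) + r ^ (2 * k + 3) \<le> expansion r (odd_tail (2 * k))"
    "expansion r (odd_tail (2 * k)) \<le> r ^ (2 * k + 1) + r ^ (2 * k + 3) + r ^ (2 * k + 5) / (1 - r)"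
proof -
  have "(\<Sum>i\<in>{2 * k, 2 * k + 2}. r ^ Suc i) \<le> expansion r (odd_tail (2 * k))"
    by (rule sum_le_expansion[OF assms]) (auto simp: odd_tail_def)
  then show "r ^ (2 * k + 1) + r ^ (2 * k + 3) \<le> expansion r (odd_tail (2 * k))"
    by (simp add: eval_nat_numeral del: power_Suc)
  have "expansion r (odd_tail (2 * k)) \<le> (\<Sum>i\<in>{2 * k, 2 * k + 2}. r ^ Suc i) + r ^ Suc (2 * k + 4) / (1 - r)"
  proof (rule expansion_le_sum[OF assms])
    fix i assume "i < 2 * k + 4" "odd_tail (2 * k) (Suc i)"
    moreover from this obtain m where "i = 2 * m" by (auto simp: odd_tail_def elim: evenE)
    ultimately have "m = k \<or> m = k + 1" by (simp add: odd_tail_def) linarith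
    with \<open>i = 2 * m\<close> show "i \<in> {2 * k, 2 * k + 2}" by auto
  qed auto
  then show "expansion r (odd_tail (2 * k)) \<le> r ^ (2 * k + 1) + r ^ (2 * k + 3) + r ^ (2 * k + 5) / (1 - r)"
    by (simp add: eval_nat_numeral del: power_Suc)
qed

section \<open>The estimates for \<open>1/2 < r < 10/19\<close>\<close>

lemma separation_inequalities:
  fixes r :: real
  assumes "1/2 < r" "r < 10/19"
  shows "2 * r^4 \<le> r^2" "r^2 + r^6 / (1 - r) + 2 * r^4 \<le> r + r^3" "r^5 / (1 - r) + 2 * r^4 \<le> r^2"
proof -
  have "(1/2) ^ n \<le> r ^ n \<and> r ^ n \<le> (10/19) ^ n" for n
    using assms by (auto intro!: power_mono)
  from this[of 2] this[of 3] this[of 4] this[of 5] this[of 6]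
  have bounds: "1/4 \<le> r^2" "r^2 \<le> 100/361" "1/8 \<le> r^3" "r^3 \<le> 1000/6859"
    "1/16 \<le> r^4" "r^4 \<le> 10000/130321" "1/32 \<le> r^5" "r^5 \<le> 100000/2476099" "r^6 \<le> 1000000/47045881"
    by (simp_all add: power_divide)
  have "0 < 1 - r" using assms by simp
  show "2 * r^4 \<le> r^2" using bounds by linarith
  have "(r + r^3 - r^2 - 2 * r^4) * (1 - r) = r - 2 * r^2 + 2 * r^3 - 3 * r^4 + 2 * r^5"
    by algebra
  then have "r^6 \<le> (r + r^3 - r^2 - 2 * r^4) * (1 - r)"
    using assms bounds by linarith
  then have "r^6 / (1 - r) \<le> r + r^3 - r^2 - 2 * r^4"
    by (simp only: pos_divide_le_eq[OF \<open>0 < 1 - r\<close>])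
  then show "r^2 + r^6 / (1 - r) + 2 * r^4 \<le> r + r^3" by linarith
  have "0 \<le> r^2 * (1 - r - 2 * r^2 + r^3)"
    using assms bounds by simp
  moreover have "(r^2 - 2 * r^4) * (1 - r) - r^5 = r^2 * (1 - r - 2 * r^2 + r^3)"
    by algebra
  ultimately have "r^5 \<le> (r^2 - 2 * r^4) * (1 - r)"
    by linarith
  then have "r^5 / (1 - r) \<le> r^2 - 2 * r^4"
    by (simp only: pos_divide_le_eq[OF \<open>0 < 1 - r\<close>])
  then show "r^5 / (1 - r) + 2 * r^4 \<le> r^2" by linarith
qed

context
  fixes r :: real and k :: nat
  assumes r: "1/2 < r" "r < 10/19" and sum_r: "(\<Sum>j<k. r ^ Suc j) = 1"
begin

lemma r_unit_interval: "0 \<le> r" "r < 1"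
  using r by auto

lemma scaled_expansion_A_set_bounds:
  assumes "a \<in> A_set k"
  shows "2 * r ^ (2 * k + 4) \<le> r ^ k * (expansion r a - 1)"
    "r ^ k * (expansion r a - 1) \<le> r / (1 - r) - 2 * r ^ (2 * k + 4)"
proof -
  note ineq = separation_inequalities[OF r]
  have "r ^ (2 * k) * (2 * r^4) \<le> r ^ (2 * k) * r^2"
    using ineq(1) r_unit_interval by (intro mult_left_mono) auto
  then have "2 * r ^ (2 * k + 4) \<le> r ^ k * r ^ (k + 2)"
    unfolding power_add power_even_eq power2_eq_square by (simp add: algebra_simps)
  also have "\<dots> \<le> r ^ k * (expansion r a - 1)"
    using expansion_A_set_ge[OF r_unit_interval sum_r assms] r_unit_interval
    by (intro mult_left_mono) auto
  finally show "2 * r ^ (2 * k + 4) \<le> r ^ k * (expansion r a - 1)" .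
  have "1 \<le> expansion r a"
    using expansion_A_set_ge[OF r_unit_interval sum_r assms] zero_le_power[of r "k + 2"] r
    by linarith
  then have "r ^ k * (expansion r a - 1) \<le> 1 * (r / (1 - r) - 1)"
    using expansion_bounds[OF r_unit_interval, of a] r
    by (intro mult_mono) (auto simp: power_le_one field_simps)
  then have "r ^ k * (expansion r a - 1) \<le> r / (1 - r) - 1" by simp
  moreover have "r ^ (2 * k + 4) \<le> r ^ 4"
    using r_unit_interval by (intro power_decreasing) auto
  moreover have "r ^ 2 \<le> 1" using r_unit_interval by (simp add: power_le_one)
  ultimately show "r ^ k * (expansion r a - 1) \<le> r / (1 - r) - 2 * r ^ (2 * k + 4)"
    using ineq(1) by linarith
qed

lemma strongly_interleaved_expansion_images:
  assumes "3 \<le> k"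
  shows "strongly_interleaved (r ^ (2 * k + 4)) ((\<lambda>e. 1 + expansion r e) ` S_set (k - 1))
    ((\<lambda>a. 1 + r ^ k * (expansion r a - 1)) ` A_set k)"
proof (rule strongly_interleavedI)
  let ?S = "(\<lambda>e. 1 + expansion r e) ` S_set (k - 1)"
  note ineq = separation_inequalities[OF r]
  have "?S \<subseteq> {1..1 + r / (1 - r)}"
    using expansion_bounds[OF r_unit_interval] by auto
  then show "bounded ?S" by (rule bounded_subset[OF bounded_closed_interval])
  show "1 \<in> ?S"
    using S_set_const[of "k - 1" False] assms
    by (intro rev_image_eqI[of "\<lambda>_. False"]) (auto simp: expansion_False)
  show "1 + r / (1 - r) \<in> ?S"
    using S_set_const[of "k - 1" True] assms r_unit_interval
    by (intro rev_image_eqI[of "\<lambda>_. True"]) (auto simp: expansion_True)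
  show "1 + expansion r (odd_tail (2 * k)) \<in> ?S"
    using odd_tail_in_S_set[of "k - 1"] assms by simp
  show "(\<lambda>a. 1 + r ^ k * (expansion r a - 1)) ` A_set k
    \<subseteq> {1 + 2 * r ^ (2 * k + 4)..1 + r / (1 - r) - 2 * r ^ (2 * k + 4)}"
  proof (rule image_subsetI)
    fix a assume "a \<in> A_set k"
    from scaled_expansion_A_set_bounds[OF this]
    show "1 + r ^ k * (expansion r a - 1) \<in> {1 + 2 * r ^ (2 * k + 4)..1 + r / (1 - r) - 2 * r ^ (2 * k + 4)}"
      by simp
  qed
  show "1 + r ^ k * (expansion r (A_least k) - 1) \<in> (\<lambda>a. 1 + r ^ k * (expansion r a - 1)) ` A_set k"
    "1 + r ^ k * (expansion r (A_greatest k) - 1) \<in> (\<lambda>a. 1 + r ^ k * (expansion r a - 1)) ` A_set k"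
    using A_least_in_A_set A_greatest_in_A_set by auto
  have "r ^ k * (expansion r (A_least k) - 1) \<le> r ^ k * (r ^ (k + 2) + r ^ (k + 6) / (1 - r))"
    using expansion_A_least_le[OF r_unit_interval sum_r] r_unit_interval
    by (intro mult_left_mono) auto
  also have "\<dots> = r ^ (2 * k) * (r^2 + r^6 / (1 - r) + 2 * r^4) - 2 * r ^ (2 * k + 4)"
    unfolding power_add power_even_eq power2_eq_square by (simp add: algebra_simps)
  also have "\<dots> \<le> r ^ (2 * k) * (r + r^3) - 2 * r ^ (2 * k + 4)"
    using ineq(2) r_unit_interval by (simp add: mult_left_mono)
  also have "\<dots> = r ^ (2 * k + 1) + r ^ (2 * k + 3) - 2 * r ^ (2 * k + 4)"
    unfolding power_add by (simp add: algebra_simps)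
  also have "\<dots> \<le> expansion r (odd_tail (2 * k)) - 2 * r ^ (2 * k + 4)"
    using expansion_odd_tail_bounds(1)[OF r_unit_interval] by simp
  finally show "1 + r ^ k * (expansion r (A_least k) - 1) + 2 * r ^ (2 * k + 4)
    \<le> 1 + expansion r (odd_tail (2 * k))" by simp
  have "expansion r (odd_tail (2 * k)) + 2 * r ^ (2 * k + 4)
    \<le> r ^ (2 * k + 1) + r ^ (2 * k + 3) + r ^ (2 * k + 5) / (1 - r) + 2 * r ^ (2 * k + 4)"
    using expansion_odd_tail_bounds(2)[OF r_unit_interval] by simp
  also have "\<dots> = r ^ (2 * k) * (r + r^3 + (r^5 / (1 - r) + 2 * r^4))"
    unfolding power_add by (simp add: algebra_simps)
  also have "\<dots> \<le> r ^ (2 * k) * (r + r^3 + r^2)"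
    using ineq(3) r_unit_interval by (intro mult_left_mono) auto
  also have "\<dots> = r ^ k * (r ^ (k + 1) + r ^ (k + 2) + r ^ (k + 3))"
    unfolding power_add power_even_eq power2_eq_square by (simp add: algebra_simps)
  also have "\<dots> \<le> r ^ k * (expansion r (A_greatest k) - 1)"
    using expansion_A_greatest_ge[OF r_unit_interval sum_r] r_unit_interval
    by (intro mult_left_mono) auto
  finally show "1 + expansion r (odd_tail (2 * k))
    \<le> 1 + r ^ k * (expansion r (A_greatest k) - 1) - 2 * r ^ (2 * k + 4)" by simp
qed

end

theorem lemma4p5:
  fixes k :: nat
  assumes "k \<ge> 9"
  shows "strongly_interleaved (qk k powi (- int (2 * k + 4)))
           ((\<lambda>x. x + 1) ` (pi_q (qk k) ` S_set (k - 1)))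
           (g_qk (qk k) k ` (pi_q (qk k) ` A_set k))"
proof -
  define r where "r = inverse (qk k)"
  have r: "1/2 < r" "r < 10/19" using inverse_qk_bounds assms unfolding r_def by auto
  have sum_r: "(\<Sum>j<k. r ^ Suc j) = 1" using qk_root(3)[of k] assms unfolding r_def by auto
  have "(\<lambda>x. x + 1) ` (pi_q (qk k) ` S_set (k - 1)) = (\<lambda>e. 1 + expansion r e) ` S_set (k - 1)"
    using pi_q_eq_expansion unfolding r_def by (simp add: image_image add.commute)
  moreover have "g_qk (qk k) k ` (pi_q (qk k) ` A_set k)
    = (\<lambda>a. 1 + r ^ k * (expansion r a - 1)) ` A_set k"
    using pi_q_eq_expansion g_qk_eq[of k "qk k"] sum_r assms
    unfolding r_def by (simp add: image_image)
  moreover have "qk k powi (- int (2 * k + 4)) = r ^ (2 * k + 4)"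
    unfolding r_def by (rule powi_neg_eq_inverse_power)
  ultimately show ?thesis
    using strongly_interleaved_expansion_images[OF r sum_r] assms by simp
qed

end
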